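(* Let $E$ be a separable Banach space over $K$ and let $X=(X_1,\dots,X_n)$ be a vector of independent, identically distributed, $E$-valued $K$-Gaussian random variables. Let $\{\alpha_1,\dots,\alpha_m\}$ be an orthogonal set in $K^n$, where $\alpha_j=(\alpha_{j,1},\dots,\alpha_{j,n})$, and let $A$ be the $n\times m$ matrix whose $j$-th column is $\alpha_j$. Then $Y=XA$, i.e. $Y_j=\sum_{i=1}^n\alpha_{j,i}X_i$ for $1\le j\le m$, is a vector of independent $K$-Gaussian random variables.
   Context: $K$ is a local field (locally compact, non-discrete, totally disconnected topological field) with its non-archimedean absolute value $|\cdot|$ ($|x|=0\iff x=0$, $|xy|=|x||y|$, $|x+y|\le|x|\vee|y|$). A normed space over $K$ is a $K$-vector space with $\|\cdot\|$ satisfying $\|x\|=0\iff x=0$, $\|\alpha x\|=|\alpha|\|x\|$, $\|x+y\|\le\|x\|\vee\|y\|$; a Banach space if complete. $K^n$ has norm $|(x_1,\dots,x_n)|=|x_1|\vee\dots\vee|x_n|$. A subset $F$ of a normed space is orthogonal if $\|\sum_{i=1}^k\beta_ix_i\|=\bigvee_{i=1}^k|\beta_i|\|x_i\|$ for all finite $\{x_1,\dots,x_k\}\subset F$ and $\beta_i\in K$; orthonormal if moreover each element has norm $1$. For a separable Banach space $E$ over $K$, an $E$-valued random variable $X$ is $K$-Gaussian if whenever $X_1,X_2$ are independent copies of $X$ and $(\alpha_{11},\alpha_{12}),(\alpha_{21},\alpha_{22})$ is an orthonormal pair in $K^2$, $(\alpha_{11}X_1+\alpha_{12}X_2,\alpha_{21}X_1+\alpha_{22}X_2)$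 has the same law as $(X_1,X_2)$. *)

theory Defs
  imports "HOL-Probability.Probability"
begin

definition nonarch_abs :: "('k::field \<Rightarrow> real) \<Rightarrow> bool" where
  "nonarch_abs absv \<longleftrightarrow>
     (\<forall>x. absv x \<ge> 0) \<and> (\<forall>x. absv x = 0 \<longleftrightarrow> x = 0) \<and>
     (\<forall>x y. absv (x * y) = absv x * absv y) \<and>
     (\<forall>x y. absv (x + y) \<le> max (absv x) (absv y))"

definition seq_compact_abs :: "('k::field \<Rightarrow> real) \<Rightarrow> 'k set \<Rightarrow> bool" where
  "seq_compact_abs absv S \<longleftrightarrow>
     (\<forall>f::nat \<Rightarrow> 'k. (\<forall>k. f k \<in> S) \<longrightarrow>
        (\<exists>r l. strict_mono r \<and> l \<in> S \<and> (\<lambda>k. absv (f (r k) - l)) \<longlonglongrightarrow> 0))"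

text \<open>K is a local field: the topology is the one of the non-archimedean absolute value,
  it is non-discrete and locally compact (totally disconnected is automatic).\<close>
definition local_field :: "('k::field \<Rightarrow> real) \<Rightarrow> bool" where
  "local_field absv \<longleftrightarrow> nonarch_abs absv \<and>
     (\<forall>x. \<forall>e>0. \<exists>y. y \<noteq> x \<and> absv (y - x) < e) \<and>
     (\<forall>x. \<exists>r>0. seq_compact_abs absv {y. absv (y - x) \<le> r})"

definition normed_space_K ::
  "('k::field \<Rightarrow> real) \<Rightarrow> ('k \<Rightarrow> 'e::ab_group_add \<Rightarrow> 'e) \<Rightarrow> ('e \<Rightarrow> real) \<Rightarrow> bool" where
  "normed_space_K absv smul nrm \<longleftrightarrow> module smul \<and>
     (\<forall>x. nrm x = 0 \<longleftrightarrow> x = 0) \<and>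
     (\<forall>a x. nrm (smul a x) = absv a * nrm x) \<and>
     (\<forall>x y. nrm (x + y) \<le> max (nrm x) (nrm y))"

definition separable_banach_K ::
  "('k::field \<Rightarrow> real) \<Rightarrow> ('k \<Rightarrow> 'e::ab_group_add \<Rightarrow> 'e) \<Rightarrow> ('e \<Rightarrow> real) \<Rightarrow> bool" where
  "separable_banach_K absv smul nrm \<longleftrightarrow> normed_space_K absv smul nrm \<and>
     (\<forall>f::nat \<Rightarrow> 'e. (\<forall>e>0. \<exists>N. \<forall>p\<ge>N. \<forall>q\<ge>N. nrm (f p - f q) < e) \<longrightarrow>
        (\<exists>l. (\<lambda>k. nrm (f k - l)) \<longlonglongrightarrow> 0)) \<and>
     (\<exists>D. countable D \<and> (\<forall>x. \<forall>e>0. \<exists>d\<in>D. nrm (x - d) < e))"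

definition borelE :: "('e::ab_group_add \<Rightarrow> real) \<Rightarrow> 'e measure" where
  "borelE nrm = sigma UNIV {U. \<forall>x\<in>U. \<exists>e>0. {y. nrm (y - x) < e} \<subseteq> U}"

definition kn_norm :: "('k::field \<Rightarrow> real) \<Rightarrow> nat \<Rightarrow> (nat \<Rightarrow> 'k) \<Rightarrow> real" where
  "kn_norm absv n x = Max (insert 0 ((\<lambda>i. absv (x i)) ` {..<n}))"

text \<open>The family v 0, ..., v (m-1) of vectors of K^n (v j i is the i-th coordinate of v j)
  is orthogonal.\<close>
definition orthogonal_family ::
  "('k::field \<Rightarrow> real) \<Rightarrow> nat \<Rightarrow> (nat \<Rightarrow> nat \<Rightarrow> 'k) \<Rightarrow> nat \<Rightarrow> bool" where
  "orthogonal_family absv n v m \<longleftrightarrow>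
     (\<forall>\<beta>::nat \<Rightarrow> 'k. kn_norm absv n (\<lambda>i. \<Sum>j<m. \<beta> j * v j i) =
        Max (insert 0 ((\<lambda>j. absv (\<beta> j) * kn_norm absv n (v j)) ` {..<m})))"

definition orthonormal_pair :: "('k::field \<Rightarrow> real) \<Rightarrow> 'k \<Rightarrow> 'k \<Rightarrow> 'k \<Rightarrow> 'k \<Rightarrow> bool" where
  "orthonormal_pair absv a11 a12 a21 a22 \<longleftrightarrow>
     (let v = (\<lambda>j i. if j = 0 then (if i = 0 then a11 else a12) else (if i = 0 then a21 else a22))
      in orthogonal_family absv 2 v 2 \<and> kn_norm absv 2 (v 0) = 1 \<and> kn_norm absv 2 (v 1) = 1)"

text \<open>X is K-Gaussian iff for independent copies X1, X2 (i.e. (X1,X2) has law mu x mu,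
  mu the law of X) and every orthonormal pair, the transformed pair has law mu x mu.\<close>
definition K_gaussian ::
  "('k::field \<Rightarrow> real) \<Rightarrow> ('k \<Rightarrow> 'e::ab_group_add \<Rightarrow> 'e) \<Rightarrow> ('e \<Rightarrow> real) \<Rightarrow> 'a measure \<Rightarrow> ('a \<Rightarrow> 'e) \<Rightarrow> bool" where
  "K_gaussian absv smul nrm M X \<longleftrightarrow> X \<in> measurable M (borelE nrm) \<and>
     (let \<mu> = distr M (borelE nrm) X in
      \<forall>a11 a12 a21 a22. orthonormal_pair absv a11 a12 a21 a22 \<longrightarrow>
        distr (\<mu> \<Otimes>\<^sub>M \<mu>) (borelE nrm \<Otimes>\<^sub>M borelE nrm)
          (\<lambda>(x, y). (smul a11 x + smul a12 y, smul a21 x + smul a22 y)) = \<mu> \<Otimes>\<^sub>M \<mu>)"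

end

theory Submission
  imports Defs
begin

text \<open>A \<open>K\<close>-Gaussian law \<open>\<mu>\<close> is invariant under every orthonormal \<open>2 \<times> 2\<close> change of variables,
  in particular under multiplication by a unit and under the shears \<open>(x, y) \<mapsto> (x, y + c x)\<close> with
  \<open>|c| \<le> 1\<close>; applied to two coordinates at a time, these maps preserve every finite power
  \<open>\<mu>\<^sup>N\<close>. If the rows of a \<open>J \<times> N\<close> matrix \<open>u\<close> are orthonormal in the max norm, every row has an
  entry of absolute value 1 and all entries have absolute value at most 1, so Gaussian
  elimination writes \<open>x \<mapsto> u x\<close> as a product of such elementary operations and of a smaller
  matrix with orthonormal rows; by induction on \<open>N\<close>, \<open>x \<mapsto> u x\<close> maps \<open>\<mu>\<^sup>N\<close> onto \<open>\<mu>\<^sup>J\<close>.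
  An orthogonal family \<open>\<alpha>\<^sub>1, \<dots>, \<alpha>\<^sub>m\<close> becomes orthonormal in \<open>K\<^sup>n \<times> K\<^sup>m\<close> after dividing each
  \<open>\<alpha>\<^sub>j\<close> by some \<open>c\<^sub>j\<close> with \<open>|c\<^sub>j| = \<parallel>\<alpha>\<^sub>j\<parallel>\<close> and replacing zero rows by fresh unit vectors.
  Hence \<open>Y\<^sub>j = c\<^sub>j Z\<^sub>j\<close> with \<open>Z\<close> distributed as \<open>\<mu>\<^sup>m\<close>, so the \<open>Y\<^sub>j\<close> are independent, and each
  is Gaussian because scaling commutes with the orthonormal changes of variables.\<close>

section \<open>Ultrametric linear algebra\<close>

definition max0 :: "'a set \<Rightarrow> ('a \<Rightarrow> real) \<Rightarrow> real" where
  "max0 S f = Max (insert 0 (f ` S))"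

lemma max0_le_iff: "finite S \<Longrightarrow> max0 S f \<le> r \<longleftrightarrow> 0 \<le> r \<and> (\<forall>s\<in>S. f s \<le> r)"
  unfolding max0_def by auto

lemma max0_nonneg: "finite S \<Longrightarrow> 0 \<le> max0 S f"
  unfolding max0_def by auto

lemma max0_upper: "finite S \<Longrightarrow> s \<in> S \<Longrightarrow> f s \<le> max0 S f"
  unfolding max0_def by auto

lemma max0_eqI:
  assumes "finite A" "finite B" "\<And>r. 0 \<le> r \<Longrightarrow> (\<forall>a\<in>A. f a \<le> r) \<longleftrightarrow> (\<forall>b\<in>B. g b \<le> r)"
  shows "max0 A f = max0 B g"
  using assms max0_le_iff[of A f] max0_le_iff[of B g] max0_nonneg[of A f] max0_nonneg[of B g]
  by (meson order.antisym order.refl)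

lemma max0_cong: "S = T \<Longrightarrow> (\<And>x. x \<in> T \<Longrightarrow> f x = g x) \<Longrightarrow> max0 S f = max0 T g"
  unfolding max0_def by (simp cong: image_cong)

lemma max0_attained: "finite S \<Longrightarrow> 0 < max0 S f \<Longrightarrow> \<exists>s\<in>S. f s = max0 S f"
  using Max_in[of "insert 0 (f ` S)"] unfolding max0_def by auto

lemma max0_update_le:
  assumes "finite J" "j0 \<in> J" "y \<le> max0 (J - {j0}) f"
  shows "max0 J (\<lambda>j. if j = j0 then y else f j) = max0 (J - {j0}) f"
proof (rule max0_eqI)
  fix r :: real assume "0 \<le> r"
  then show "(\<forall>j\<in>J. (if j = j0 then y else f j) \<le> r) \<longleftrightarrow> (\<forall>j\<in>J - {j0}. f j \<le> r)"
    using assms max0_le_iff[of "J - {j0}" f r] by auto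
qed (use assms in auto)

lemma ball_lessThan_add_iff:
  fixes n m :: nat
  shows "(\<forall>i\<in>{..<n + m}. P i) \<longleftrightarrow> (\<forall>i<n. P i) \<and> (\<forall>k<m. P (n + k))"
proof (intro iffI ballI)
  fix i assume "(\<forall>i<n. P i) \<and> (\<forall>k<m. P (n + k))" "i \<in> {..<n + m}"
  then show "P i"
    by (cases "i < n") (auto dest: spec[of _ "i - n"])
qed auto

lemma kn_norm_eq_max0: "kn_norm absv n x = max0 {..<n} (\<lambda>i. absv (x i))"
  unfolding kn_norm_def max0_def by simp

lemma orthogonal_family_iff_max0:
  "orthogonal_family absv n v m \<longleftrightarrow>
     (\<forall>\<beta>. max0 {..<n} (\<lambda>i. absv (\<Sum>j<m. \<beta> j * v j i)) =
          max0 {..<m} (\<lambda>j. absv (\<beta> j) * max0 {..<n} (\<lambda>i. absv (v j i))))"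
  unfolding orthogonal_family_def kn_norm_eq_max0 by (simp add: max0_def)

definition orthonormal_rows :: "('k::field \<Rightarrow> real) \<Rightarrow> 'i set \<Rightarrow> 'j set \<Rightarrow> ('j \<Rightarrow> 'i \<Rightarrow> 'k) \<Rightarrow> bool" where
  "orthonormal_rows absv N J u \<longleftrightarrow>
     (\<forall>\<beta>. max0 N (\<lambda>i. absv (\<Sum>j\<in>J. \<beta> j * u j i)) = max0 J (\<lambda>j. absv (\<beta> j)))"

locale nonarch_field =
  fixes absv :: "'k::field \<Rightarrow> real"
  assumes nonarch: "nonarch_abs absv"
begin

lemma absv_nonneg [simp]: "0 \<le> absv x"
  and absv_eq_0_iff [simp]: "absv x = 0 \<longleftrightarrow> x = 0"
  and absv_mult [simp]: "absv (x * y) = absv x * absv y"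
  and absv_add_le: "absv (x + y) \<le> max (absv x) (absv y)"
  using nonarch unfolding nonarch_abs_def by auto

lemma absv_0 [simp]: "absv 0 = 0"
  by simp

lemma absv_1 [simp]: "absv 1 = 1"
  using absv_mult[of 1 1] absv_eq_0_iff[of 1] by (metis mult_cancel_right1 mult_1 one_neq_zero)

lemma absv_minus [simp]: "absv (- x) = absv x"
proof -
  have "absv (- 1) * absv (- 1) = 1"
    by (simp flip: absv_mult)
  then have "absv (- 1) = 1"
    using absv_nonneg[of "- 1"] by (metis abs_of_nonneg abs_square_eq_1 power2_eq_square)
  then show ?thesis
    using absv_mult[of "- 1" x] by simp
qed

lemma absv_divide [simp]: "absv (x / y) = absv x / absv y"
  using absv_mult[of "x / y" y] by (cases "y = 0") (simp_all add: field_simps)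

lemma absv_sum_le: "finite S \<Longrightarrow> absv (\<Sum>i\<in>S. f i) \<le> max0 S (\<lambda>i. absv (f i))"
proof (induction S rule: finite_induct)
  case (insert a S)
  then have "absv (\<Sum>i\<in>insert a S. f i) \<le> max (absv (f a)) (max0 S (\<lambda>i. absv (f i)))"
    using absv_add_le[of "f a" "\<Sum>i\<in>S. f i"] by auto
  moreover have "max0 S (\<lambda>i. absv (f i)) \<le> max0 (insert a S) (\<lambda>i. absv (f i))"
    using insert.hyps by (auto simp: max0_le_iff max0_nonneg intro: max0_upper)
  moreover have "absv (f a) \<le> max0 (insert a S) (\<lambda>i. absv (f i))"
    using insert.hyps by (intro max0_upper) auto
  ultimately show ?case
    by linarith
qed (simp add: max0_def)

lemma absv_sum_mult_le:
  assumes "finite S" "\<And>j. j \<in> S \<Longrightarrow> absv (d j) \<le> 1"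
  shows "absv (\<Sum>j\<in>S. \<beta> j * d j) \<le> max0 S (\<lambda>j. absv (\<beta> j))"
proof -
  have "absv (\<beta> j * d j) \<le> max0 S (\<lambda>j. absv (\<beta> j))" if "j \<in> S" for j
    using assms that mult_left_le[of "absv (d j)" "absv (\<beta> j)"] max0_upper[of S j "\<lambda>j. absv (\<beta> j)"]
    by simp
  then have "max0 S (\<lambda>j. absv (\<beta> j * d j)) \<le> max0 S (\<lambda>j. absv (\<beta> j))"
    using assms(1) by (simp add: max0_le_iff max0_nonneg)
  with absv_sum_le[OF assms(1)] show ?thesis
    by (rule order.trans)
qed

lemma max_absv_add_mult:
  assumes "absv c \<le> 1"
  shows "max (absv (a + b * c)) (absv b) = max (absv a) (absv b)"
proof -
  have bc: "absv (b * c) \<le> absv b"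
    using assms mult_left_le[of "absv c" "absv b"] by simp
  have "absv (a + b * c) \<le> max (absv a) (absv b)"
    using absv_add_le[of a "b * c"] bc by auto
  moreover have "absv a \<le> max (absv (a + b * c)) (absv b)"
    using absv_add_le[of "a + b * c" "- (b * c)"] bc by auto
  ultimately show ?thesis
    by linarith
qed

lemma orthonormal_pair_iff:
  "orthonormal_pair absv a11 a12 a21 a22 \<longleftrightarrow>
     (\<forall>\<beta>::nat \<Rightarrow> 'k. max (absv (\<beta> 0 * a11 + \<beta> 1 * a21)) (absv (\<beta> 0 * a12 + \<beta> 1 * a22)) =
        max (absv (\<beta> 0) * max (absv a11) (absv a12)) (absv (\<beta> 1) * max (absv a21) (absv a22))) \<and>
     max (absv a11) (absv a12) = 1 \<and> max (absv a21) (absv a22) = 1"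
proof -
  have "max0 {0, Suc 0} f = max (f 0) (f (Suc 0))" if "f 0 \<ge> 0" "f (Suc 0) \<ge> 0" for f
    using that by (simp add: max0_def max_def)
  moreover have "{..<2::nat} = {0, Suc 0}"
    by auto
  ultimately show ?thesis
    unfolding orthonormal_pair_def Let_def orthogonal_family_iff_max0 kn_norm_eq_max0
    by (simp add: le_max_iff_disj)
qed

lemma orthonormal_pair_shear: "absv c \<le> 1 \<Longrightarrow> orthonormal_pair absv 1 0 c 1"
  unfolding orthonormal_pair_iff by (simp add: max_absv_add_mult)

lemma orthonormal_pair_scale: "absv t = 1 \<Longrightarrow> orthonormal_pair absv t 0 0 1"
  unfolding orthonormal_pair_iff by simp

lemma orthonormal_rows_row_norm:
  fixes u :: "'j \<Rightarrow> 'i \<Rightarrow> 'k"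
  assumes J: "finite J" and orth: "orthonormal_rows absv N J u" and "j \<in> J"
  shows "max0 N (\<lambda>i. absv (u j i)) = 1"
proof -
  define \<delta> :: "'j \<Rightarrow> 'k" where "\<delta> k = (if k = j then 1 else 0)" for k
  have "(\<Sum>k\<in>J. \<delta> k * u k i) = u j i" for i
    using J \<open>j \<in> J\<close> by (simp add: \<delta>_def if_distrib[of "\<lambda>x. x * _"] sum.delta cong: if_cong)
  moreover have "max0 J (\<lambda>k. absv (\<delta> k)) = 1"
    using max0_upper[OF J \<open>j \<in> J\<close>, of "\<lambda>k. absv (\<delta> k)"] J
    by (intro antisym) (simp_all add: max0_le_iff \<delta>_def)
  ultimately show ?thesis
    using orth[unfolded orthonormal_rows_def, THEN spec, of \<delta>] by simp
qed

lemma orthonormal_rows_entry_le: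
  assumes "finite N" "finite J" "orthonormal_rows absv N J u" "j \<in> J" "i \<in> N"
  shows "absv (u j i) \<le> 1"
  using max0_upper[of N i "\<lambda>i. absv (u j i)"] orthonormal_rows_row_norm[of J N u j] assms by simp

lemma orthonormal_rows_pivot:
  assumes "finite N" "finite J" "orthonormal_rows absv N J u" "j \<in> J"
  obtains i where "i \<in> N" "absv (u j i) = 1"
  using max0_attained[of N "\<lambda>i. absv (u j i)"] orthonormal_rows_row_norm[of J N u j] assms by auto

lemma orthonormal_rows_eliminate:
  fixes u :: "'j \<Rightarrow> 'i \<Rightarrow> 'k"
  assumes N: "finite N" and J: "finite J" and orth: "orthonormal_rows absv N J u"
    and j0: "j0 \<in> J" and i0: "i0 \<in> N" and pivot: "absv (u j0 i0) = 1"
  shows "orthonormal_rows absv (N - {i0}) (J - {j0}) (\<lambda>j i. u j i - u j i0 / u j0 i0 * u j0 i)"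
  unfolding orthonormal_rows_def
proof
  fix \<beta> :: "'j \<Rightarrow> 'k"
  define d where "d j = u j i0 / u j0 i0" for j
  define s where "s = (\<Sum>j\<in>J - {j0}. \<beta> j * d j)"
  define \<gamma> where "\<gamma> = \<beta>(j0 := - s)"
  have comb: "(\<Sum>j\<in>J - {j0}. \<beta> j * (u j i - d j * u j0 i)) = (\<Sum>j\<in>J. \<gamma> j * u j i)" for i
  proof -
    have "(\<Sum>j\<in>J. \<gamma> j * u j i) = - s * u j0 i + (\<Sum>j\<in>J - {j0}. \<beta> j * u j i)"
      using J j0 by (simp add: \<gamma>_def sum.remove)
    moreover have "(\<Sum>j\<in>J - {j0}. \<beta> j * (u j i - d j * u j0 i)) = (\<Sum>j\<in>J - {j0}. \<beta> j * u j i) - s * u j0 i"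
      by (simp add: s_def right_diff_distrib sum_subtractf sum_distrib_right mult.assoc)
    ultimately show ?thesis
      by simp
  qed
  have "u j0 i0 \<noteq> 0"
    using pivot by auto
  then have "(\<Sum>j\<in>J. \<gamma> j * u j i0) = 0"
    using comb[of i0] by (simp add: d_def)
  then have "max0 (N - {i0}) (\<lambda>i. absv (\<Sum>j\<in>J. \<gamma> j * u j i)) = max0 N (\<lambda>i. absv (\<Sum>j\<in>J. \<gamma> j * u j i))"
    using N by (intro max0_eqI) auto
  also have "\<dots> = max0 J (\<lambda>j. absv (\<gamma> j))"
    using orth unfolding orthonormal_rows_def by blast
  also have "\<dots> = max0 J (\<lambda>j. if j = j0 then absv s else absv (\<beta> j))"
    by (intro max0_cong) (auto simp: \<gamma>_def)
  also have "\<dots> = max0 (J - {j0}) (\<lambda>j. absv (\<beta> j))"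
  proof (rule max0_update_le[OF J j0])
    show "absv s \<le> max0 (J - {j0}) (\<lambda>j. absv (\<beta> j))"
      unfolding s_def using J orthonormal_rows_entry_le[OF N J orth _ i0] pivot
      by (intro absv_sum_mult_le) (simp_all add: d_def)
  qed
  finally show "max0 (N - {i0}) (\<lambda>i. absv (\<Sum>j\<in>J - {j0}. \<beta> j * (u j i - u j i0 / u j0 i0 * u j0 i))) =
      max0 (J - {j0}) (\<lambda>j. absv (\<beta> j))"
    using comb by (simp add: d_def)
qed

lemma max0_absv_attained: "finite S \<Longrightarrow> \<exists>c. absv c = max0 S (\<lambda>i. absv (v i))"
  using max0_attained[of S "\<lambda>i. absv (v i)"] max0_nonneg[of S "\<lambda>i. absv (v i)"]
  by (cases "max0 S (\<lambda>i. absv (v i)) = 0") (auto intro: exI[of _ 0])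

text \<open>For a zero row (\<open>c j = 0\<close>) the entries \<open>\<alpha> j i / c j\<close> vanish by the convention \<open>x / 0 = 0\<close>,
  leaving only the fresh unit vector in column \<open>n + j\<close>.\<close>

lemma orthonormal_rows_normalize:
  assumes orth: "orthogonal_family absv n \<alpha> m"
    and c: "\<And>j. absv (c j) = max0 {..<n} (\<lambda>i. absv (\<alpha> j i))"
  shows "orthonormal_rows absv {..<n + m} {..<m}
           (\<lambda>j i. if i < n then \<alpha> j i / c j else if i = n + j \<and> c j = 0 then 1 else 0)"
  unfolding orthonormal_rows_def
proof
  fix b :: "nat \<Rightarrow> 'k"
  define v where "v i = (\<Sum>j<m. b j * (if i < n then \<alpha> j i / c j else if i = n + j \<and> c j = 0 then 1 else 0))" for i
  have low: "v i = (\<Sum>j<m. b j / c j * \<alpha> j i)" if "i < n" for i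
    using that unfolding v_def by (intro sum.cong) (simp_all add: field_simps)
  have high: "v (n + k) = (if c k = 0 then b k else 0)" if "k < m" for k
  proof -
    have "v (n + k) = (\<Sum>j<m. if j = k then (if c k = 0 then b k else 0) else 0)"
      unfolding v_def by (intro sum.cong) auto
    then show ?thesis
      using that by simp
  qed
  have "max0 {..<n} (\<lambda>i. absv (v i)) = max0 {..<n} (\<lambda>i. absv (\<Sum>j<m. b j / c j * \<alpha> j i))"
    using low by (intro max0_cong) auto
  also have "\<dots> = max0 {..<m} (\<lambda>j. absv (b j / c j) * max0 {..<n} (\<lambda>i. absv (\<alpha> j i)))"
    by (rule orth[unfolded orthogonal_family_iff_max0, THEN spec, of "\<lambda>j. b j / c j"])
  also have "\<dots> = max0 {..<m} (\<lambda>j. if c j = 0 then 0 else absv (b j))"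
    unfolding c[symmetric] by (intro max0_cong) auto
  finally have low_max: "max0 {..<n} (\<lambda>i. absv (v i)) = max0 {..<m} (\<lambda>j. if c j = 0 then 0 else absv (b j))" .
  show "max0 {..<n + m} (\<lambda>i. absv (v i)) = max0 {..<m} (\<lambda>j. absv (b j))"
  proof (rule max0_eqI)
    fix r :: real assume "0 \<le> r"
    have "(\<forall>i<n. absv (v i) \<le> r) \<longleftrightarrow> max0 {..<n} (\<lambda>i. absv (v i)) \<le> r"
      using \<open>0 \<le> r\<close> by (auto simp: max0_le_iff)
    also have "\<dots> \<longleftrightarrow> (\<forall>j<m. c j \<noteq> 0 \<longrightarrow> absv (b j) \<le> r)"
      using \<open>0 \<le> r\<close> unfolding low_max by (auto simp: max0_le_iff)
    finally have "(\<forall>i<n. absv (v i) \<le> r) \<longleftrightarrow> (\<forall>j<m. c j \<noteq> 0 \<longrightarrow> absv (b j) \<le> r)" .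
    then show "(\<forall>i\<in>{..<n + m}. absv (v i) \<le> r) \<longleftrightarrow> (\<forall>j\<in>{..<m}. absv (b j) \<le> r)"
      unfolding ball_lessThan_add_iff using \<open>0 \<le> r\<close> by (auto simp: high)
  qed auto
qed

lemma orthogonal_family_rescale_orthonormal:
  assumes "orthogonal_family absv n \<alpha> m"
  obtains c \<beta> where "orthonormal_rows absv {..<n + m} {..<m} \<beta>"
    and "\<And>j i. c j * \<beta> j i = (if i < n then \<alpha> j i else 0)"
proof -
  have "\<forall>j. \<exists>c. absv c = max0 {..<n} (\<lambda>i. absv (\<alpha> j i))"
    by (intro allI max0_absv_attained) simp
  then obtain c where c: "\<And>j. absv (c j) = max0 {..<n} (\<lambda>i. absv (\<alpha> j i))"
    by (metis choice)
  have "\<alpha> j i = 0" if "c j = 0" "i < n" for i j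
  proof -
    have "absv (\<alpha> j i) \<le> 0"
      using max0_upper[of "{..<n}" i "\<lambda>i. absv (\<alpha> j i)"] c[of j] that by simp
    then show ?thesis
      using absv_nonneg[of "\<alpha> j i"] absv_eq_0_iff[of "\<alpha> j i"] by linarith
  qed
  then have "c j * (if i < n then \<alpha> j i / c j else if i = n + j \<and> c j = 0 then 1 else 0) =
      (if i < n then \<alpha> j i else 0)" for i j
    by (cases "c j = 0") auto
  with orthonormal_rows_normalize[OF assms c] show ?thesis
    by (rule that)
qed

end

section \<open>Measure-preserving maps between product measures\<close>

definition measure_preserving :: "'a measure \<Rightarrow> 'b measure \<Rightarrow> ('a \<Rightarrow> 'b) \<Rightarrow> bool" where
  "measure_preserving M N f \<longleftrightarrow> f \<in> M \<rightarrow>\<^sub>M N \<and> distr M N f = N"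

lemma measure_preserving_comp:
  assumes "measure_preserving M N f" "measure_preserving N L g"
  shows "measure_preserving M L (g \<circ> f)"
  using assms distr_distr[of g N L f M] unfolding measure_preserving_def by auto

lemma measure_preserving_cong:
  assumes "measure_preserving M N f" "\<And>x. x \<in> space M \<Longrightarrow> g x = f x"
  shows "measure_preserving M N g"
  using assms measurable_cong[of M g f N] distr_cong[of M M N N g f]
  unfolding measure_preserving_def by auto

lemma measure_preserving_id: "measure_preserving M M (\<lambda>x. x)"
  unfolding measure_preserving_def by (simp add: distr_id2)

lemma measure_preserving_factor:
  assumes e: "measure_preserving M N e" and g: "g \<in> N \<rightarrow>\<^sub>M L" and h: "measure_preserving M L h"
    and gh: "\<And>x. x \<in> space M \<Longrightarrow> g (e x) = h x"
  shows "measure_preserving N L g"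
proof -
  have "distr N L g = distr M L (g \<circ> e)"
    using e g distr_distr[of g N L e M] unfolding measure_preserving_def by auto
  also have "\<dots> = distr M L h"
    using gh by (intro distr_cong) auto
  finally show ?thesis
    using g h unfolding measure_preserving_def by simp
qed

lemma measure_preserving_pair_measure:
  assumes f: "measure_preserving M M' f" and g: "measure_preserving N N' g"
    and "sigma_finite_measure N'"
  shows "measure_preserving (M \<Otimes>\<^sub>M N) (M' \<Otimes>\<^sub>M N') (\<lambda>(x, y). (f x, g y))"
proof -
  have [measurable]: "f \<in> M \<rightarrow>\<^sub>M M'" "g \<in> N \<rightarrow>\<^sub>M N'"
    using f g unfolding measure_preserving_def by simp_all
  have "distr M M' f \<Otimes>\<^sub>M distr N N' g = distr (M \<Otimes>\<^sub>M N) (M' \<Otimes>\<^sub>M N') (\<lambda>(x, y). (f x, g y))"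
    using assms by (intro pair_measure_distr) (simp_all add: measure_preserving_def)
  then show ?thesis
    using f g unfolding measure_preserving_def by simp
qed

lemma distr_PiM_empty:
  assumes "prob_space M" "f \<in> M \<rightarrow>\<^sub>M PiM {} N"
  shows "distr M (PiM {} N) f = PiM {} N"
proof (rule measure_eqI)
  fix A assume "A \<in> sets (distr M (PiM {} N) f)"
  then have "A = {} \<or> A = {\<lambda>_. undefined}"
    by (simp add: sets_PiM_empty)
  moreover have "f -` {\<lambda>_. undefined} \<inter> space M = space M"
    using measurable_space[OF assms(2)] by (auto simp: space_PiM)
  ultimately show "emeasure (distr M (PiM {} N) f) A = emeasure (PiM {} N) A"
    using assms by (auto simp: emeasure_distr sets_PiM_empty prob_space.emeasure_space_1)
qed simp

lemma distr_PiM_componentwise: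
  fixes I :: "'i set"
  assumes I: "finite I" and M: "\<And>i. prob_space (M i)" and f: "\<And>i. f i \<in> M i \<rightarrow>\<^sub>M N i"
  shows "distr (PiM I M) (PiM I N) (\<lambda>x. \<lambda>i\<in>I. f i (x i)) = PiM I (\<lambda>i. distr (M i) (N i) (f i))"
proof -
  interpret M: product_prob_space M I
    by (rule product_prob_spaceI) (rule M)
  interpret D: product_prob_space "\<lambda>i. distr (M i) (N i) (f i)" I
    by (rule product_prob_spaceI) (rule prob_space.prob_space_distr[OF M f])
  have F: "(\<lambda>x. \<lambda>i\<in>I. f i (x i)) \<in> PiM I M \<rightarrow>\<^sub>M PiM I N"
    using f by measurable
  show ?thesis
  proof (rule D.PiM_eqI[OF I])
    fix A assume A: "\<And>i. i \<in> I \<Longrightarrow> A i \<in> sets (distr (M i) (N i) (f i))"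
    have "(\<lambda>x. \<lambda>i\<in>I. f i (x i)) -` Pi\<^sub>E I A \<inter> space (PiM I M) = Pi\<^sub>E I (\<lambda>i. f i -` A i \<inter> space (M i))"
      by (auto simp: space_PiM PiE_iff)
    then show "emeasure (distr (PiM I M) (PiM I N) (\<lambda>x. \<lambda>i\<in>I. f i (x i))) (Pi\<^sub>E I A) =
        (\<Prod>i\<in>I. emeasure (distr (M i) (N i) (f i)) (A i))"
      using A I f by (simp add: emeasure_distr[OF F] sets_PiM_I_finite M.emeasure_PiM
          emeasure_distr measurable_sets)
  qed (simp cong: sets_PiM_cong)
qed

lemma measure_preserving_pair_PiM:
  assumes "prob_space M" "p \<noteq> q"
  shows "measure_preserving (M \<Otimes>\<^sub>M M) (PiM {p, q} (\<lambda>_. M))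
           (\<lambda>(y, z). \<lambda>i\<in>{p, q}. if i = p then y else z)"
  unfolding measure_preserving_def
proof
  interpret M: prob_space M by fact
  interpret P: product_prob_space "\<lambda>_. M"
    by (rule product_prob_spaceI) fact
  show e: "(\<lambda>(y, z). \<lambda>i\<in>{p, q}. if i = p then y else z) \<in> M \<Otimes>\<^sub>M M \<rightarrow>\<^sub>M PiM {p, q} (\<lambda>_. M)"
    by measurable
  show "distr (M \<Otimes>\<^sub>M M) (PiM {p, q} (\<lambda>_. M)) (\<lambda>(y, z). \<lambda>i\<in>{p, q}. if i = p then y else z) = PiM {p, q} (\<lambda>_. M)"
  proof (rule P.PiM_eqI)
    fix A assume A: "\<And>i. i \<in> {p, q} \<Longrightarrow> A i \<in> sets M"
    have "A p \<subseteq> space M" "A q \<subseteq> space M"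
      using A sets.sets_into_space by auto
    then have "(\<lambda>(y, z). \<lambda>i\<in>{p, q}. if i = p then y else z) -` Pi\<^sub>E {p, q} A \<inter> space (M \<Otimes>\<^sub>M M) = A p \<times> A q"
      using assms(2) by (auto simp: space_pair_measure PiE_iff)
    then show "emeasure (distr (M \<Otimes>\<^sub>M M) (PiM {p, q} (\<lambda>_. M)) (\<lambda>(y, z). \<lambda>i\<in>{p, q}. if i = p then y else z))
        (Pi\<^sub>E {p, q} A) = (\<Prod>i\<in>{p, q}. emeasure M (A i))"
      using A assms(2) by (simp add: emeasure_distr[OF e] sets_PiM_I_finite M.emeasure_pair_measure_Times)
  qed simp_all
qed

lemma measure_preserving_PiM_extend:
  assumes M: "\<And>i. prob_space (M i)" and I: "finite I" and KI: "K \<subseteq> I"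
    and \<Psi>: "measure_preserving (PiM K M) (PiM K M) \<Psi>"
  shows "measure_preserving (PiM I M) (PiM I M) (\<lambda>x. \<lambda>i\<in>I. if i \<in> K then \<Psi> (restrict x K) i else x i)"
proof (rule measure_preserving_factor)
  interpret product_prob_space M I
    by (rule product_prob_spaceI) (rule M)
  define R where "R = I - K"
  have KR: "K \<inter> R = {}" "K \<union> R = I" "finite K" "finite R"
    using I KI finite_subset unfolding R_def by auto
  have \<Psi>m [measurable]: "\<Psi> \<in> PiM K M \<rightarrow>\<^sub>M PiM K M"
    using \<Psi> unfolding measure_preserving_def by simp
  have merge: "measure_preserving (PiM K M \<Otimes>\<^sub>M PiM R M) (PiM I M) (merge K R)"
    using distr_merge[OF KR(1,3,4)] measurable_merge[of K R M] KR(2)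
    unfolding measure_preserving_def by simp
  show "measure_preserving (PiM K M \<Otimes>\<^sub>M PiM R M) (PiM I M) (merge K R)"
    by (fact merge)
  show "(\<lambda>x. \<lambda>i\<in>I. if i \<in> K then \<Psi> (restrict x K) i else x i) \<in> PiM I M \<rightarrow>\<^sub>M PiM I M"
  proof (rule measurable_restrict)
    fix i assume "i \<in> I"
    have "(\<lambda>x. \<Psi> (restrict x K) i) \<in> PiM I M \<rightarrow>\<^sub>M M i" if "i \<in> K"
      using measurable_compose[OF measurable_compose[OF measurable_restrict_subset[OF KI] \<Psi>m]
          measurable_component_singleton[OF that]] by simp
    then show "(\<lambda>x. if i \<in> K then \<Psi> (restrict x K) i else x i) \<in> PiM I M \<rightarrow>\<^sub>M M i"
      using \<open>i \<in> I\<close> by (cases "i \<in> K") simp_all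
  qed
  have "measure_preserving (PiM K M \<Otimes>\<^sub>M PiM R M) (PiM K M \<Otimes>\<^sub>M PiM R M) (\<lambda>(x, y). (\<Psi> x, y))"
    using M by (intro measure_preserving_pair_measure[OF \<Psi> measure_preserving_id]
        prob_space_imp_sigma_finite prob_space_PiM)
  from measure_preserving_comp[OF this merge]
  show "measure_preserving (PiM K M \<Otimes>\<^sub>M PiM R M) (PiM I M) (merge K R \<circ> (\<lambda>(x, y). (\<Psi> x, y)))" .
  fix z assume "z \<in> space (PiM K M \<Otimes>\<^sub>M PiM R M)"
  then obtain x y where z: "z = (x, y)" "x \<in> space (PiM K M)" "y \<in> space (PiM R M)"
    by (auto simp: space_pair_measure)
  have r: "restrict (merge K R (x, y)) K = x"
    using z KR by (auto simp: fun_eq_iff space_PiM PiE_def extensional_def merge_def)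
  show "(\<lambda>i\<in>I. if i \<in> K then \<Psi> (restrict (merge K R z) K) i else merge K R z i) =
      (merge K R \<circ> (\<lambda>(x, y). (\<Psi> x, y))) z"
    unfolding z(1) r comp_def case_prod_conv using KR by (auto simp: fun_eq_iff merge_def)
qed

lemma measure_preserving_PiM_fun_upd:
  assumes "prob_space P"
  shows "measure_preserving (P \<Otimes>\<^sub>M PiM I (\<lambda>_. P)) (PiM (insert k I) (\<lambda>_. P)) (\<lambda>(y, X). X(k := y))"
proof -
  have "(\<lambda>p. (snd p)(k := fst p)) \<in> P \<Otimes>\<^sub>M PiM I (\<lambda>_. P) \<rightarrow>\<^sub>M PiM (insert k I) (\<lambda>_. P)"
    by (rule measurable_fun_upd[where J = I]) auto
  then show ?thesis
    using distr_pair_PiM_eq_PiM[of I "\<lambda>_. P" k] assms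
    unfolding measure_preserving_def by (simp add: case_prod_beta')
qed

lemma measure_preserving_PiM_insert:
  assumes P: "prob_space P" and F: "measure_preserving (PiM N (\<lambda>_. P)) (PiM J (\<lambda>_. P)) F"
    and "i \<notin> N" "j \<notin> J"
  shows "measure_preserving (PiM (insert i N) (\<lambda>_. P)) (PiM (insert j J) (\<lambda>_. P))
           (\<lambda>x. (F (restrict x N))(j := x i))"
proof (rule measure_preserving_factor)
  have Fm [measurable]: "F \<in> PiM N (\<lambda>_. P) \<rightarrow>\<^sub>M PiM J (\<lambda>_. P)"
    using F unfolding measure_preserving_def by simp
  show "measure_preserving (P \<Otimes>\<^sub>M PiM N (\<lambda>_. P)) (PiM (insert i N) (\<lambda>_. P)) (\<lambda>(y, X). X(i := y))"
    using P by (rule measure_preserving_PiM_fun_upd)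
  show "(\<lambda>x. (F (restrict x N))(j := x i)) \<in> PiM (insert i N) (\<lambda>_. P) \<rightarrow>\<^sub>M PiM (insert j J) (\<lambda>_. P)"
    by (rule measurable_fun_upd[of _ J]) (auto intro: measurable_restrict_subset)
  have "measure_preserving (P \<Otimes>\<^sub>M PiM N (\<lambda>_. P)) (P \<Otimes>\<^sub>M PiM J (\<lambda>_. P)) (\<lambda>(y, X). (y, F X))"
    using P by (intro measure_preserving_pair_measure[OF measure_preserving_id F]
        prob_space_imp_sigma_finite prob_space_PiM)
  from measure_preserving_comp[OF this measure_preserving_PiM_fun_upd[OF P]]
  show "measure_preserving (P \<Otimes>\<^sub>M PiM N (\<lambda>_. P)) (PiM (insert j J) (\<lambda>_. P))
      ((\<lambda>(y, X). X(j := y)) \<circ> (\<lambda>(y, X). (y, F X)))" .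
  fix z assume "z \<in> space (P \<Otimes>\<^sub>M PiM N (\<lambda>_. P))"
  then obtain y X where z: "z = (y, X)" "X \<in> space (PiM N (\<lambda>_. P))"
    by (auto simp: space_pair_measure)
  have "restrict (X(i := y)) N = X"
    using z \<open>i \<notin> N\<close> by (auto simp: fun_eq_iff space_PiM PiE_def extensional_def)
  then show "(\<lambda>x. (F (restrict x N))(j := x i)) ((\<lambda>(y, X). X(i := y)) z) =
      ((\<lambda>(y, X). X(j := y)) \<circ> (\<lambda>(y, X). (y, F X))) z"
    using z by simp
qed

lemma (in prob_space) distr_PiM_iid:
  fixes X :: "'i \<Rightarrow> 'a \<Rightarrow> 'b"
  assumes "indep_vars (\<lambda>_. N) X I" "\<And>i. i \<in> I \<Longrightarrow> random_variable N (X i)"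
    and "\<And>i. i \<in> I \<Longrightarrow> distr M N (X i) = \<nu>"
  shows "distr M (PiM I (\<lambda>_. N)) (\<lambda>\<omega>. \<lambda>i\<in>I. X i \<omega>) = PiM I (\<lambda>_. \<nu>)"
proof (cases "I = {}")
  case True
  have "(\<lambda>\<omega>. \<lambda>i\<in>{}. X i \<omega>) \<in> M \<rightarrow>\<^sub>M PiM {} (\<lambda>_. N)"
    by (rule measurable_restrict) simp
  from distr_PiM_empty[OF prob_space_axioms this] True show ?thesis
    by (simp add: PiM_empty)
next
  case False
  then show ?thesis
    using assms(1,3) indep_vars_iff_distr_eq_PiM'[OF False assms(2)] by (simp cong: PiM_cong)
qed

lemma (in prob_space) distr_eq_component_if_distr_eq_PiM:
  assumes Y: "\<And>i. i \<in> I \<Longrightarrow> random_variable (N i) (Y i)"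
    and \<nu>: "\<And>i. i \<in> I \<Longrightarrow> prob_space (\<nu> i)" "\<And>i. i \<in> I \<Longrightarrow> sets (\<nu> i) = sets (N i)"
    and joint: "distr M (PiM I N) (\<lambda>\<omega>. \<lambda>i\<in>I. Y i \<omega>) = PiM I \<nu>"
    and "i \<in> I"
  shows "distr M (N i) (Y i) = \<nu> i"
proof -
  have "distr M (N i) (Y i) = distr (distr M (PiM I N) (\<lambda>\<omega>. \<lambda>i\<in>I. Y i \<omega>)) (N i) (\<lambda>z. z i)"
    using \<open>i \<in> I\<close> Y by (subst distr_distr) (auto intro!: distr_cong measurable_restrict)
  also have "\<dots> = distr (PiM I \<nu>) (\<nu> i) (\<lambda>z. z i)"
    unfolding joint using \<nu>(2)[OF \<open>i \<in> I\<close>] by (intro distr_cong) auto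
  also have "\<dots> = \<nu> i"
    using \<nu>(1) \<open>i \<in> I\<close> by (rule distr_PiM_component)
  finally show ?thesis .
qed

lemma (in prob_space) indep_vars_if_distr_eq_PiM:
  assumes Y: "\<And>i. i \<in> I \<Longrightarrow> random_variable (N i) (Y i)"
    and \<nu>: "\<And>i. i \<in> I \<Longrightarrow> prob_space (\<nu> i)" "\<And>i. i \<in> I \<Longrightarrow> sets (\<nu> i) = sets (N i)"
    and joint: "distr M (PiM I N) (\<lambda>\<omega>. \<lambda>i\<in>I. Y i \<omega>) = PiM I \<nu>"
  shows "indep_vars N Y I"
proof (cases "I = {}")
  case True
  then show ?thesis
    by (simp add: indep_vars_def indep_sets_def)
next
  case False
  have "PiM I \<nu> = PiM I (\<lambda>i. distr M (N i) (Y i))"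
    using distr_eq_component_if_distr_eq_PiM[OF Y \<nu> joint] by (simp cong: PiM_cong)
  then show ?thesis
    using indep_vars_iff_distr_eq_PiM'[OF False Y] joint by simp
qed

lemma pair_measure_return:
  assumes "x \<in> space M" "y \<in> space N"
  shows "return M x \<Otimes>\<^sub>M return N y = return (M \<Otimes>\<^sub>M N) (x, y)"
proof (rule pair_measure_eqI)
  show "sigma_finite_measure (return M x)" "sigma_finite_measure (return N y)"
    using assms by (auto intro: prob_space_imp_sigma_finite prob_space_return)
  fix A C assume "A \<in> sets (return M x)" "C \<in> sets (return N y)"
  then show "emeasure (return M x) A * emeasure (return N y) C = emeasure (return (M \<Otimes>\<^sub>M N) (x, y)) (A \<times> C)"
    by (simp add: indicator_times)
qed (simp cong: sets_pair_measure_cong)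

section \<open>Borel measurability and Gaussian laws on separable ultrametric spaces\<close>

definition norm_open :: "('e::ab_group_add \<Rightarrow> real) \<Rightarrow> 'e set \<Rightarrow> bool" where
  "norm_open nrm U \<longleftrightarrow> (\<forall>x\<in>U. \<exists>e>0. {y. nrm (y - x) < e} \<subseteq> U)"

lemma borelE_eq_sigma: "borelE nrm = sigma UNIV (Collect (norm_open nrm))"
  unfolding borelE_def norm_open_def ..

lemma space_borelE [simp]: "space (borelE nrm) = UNIV"
  by (simp add: borelE_def)

lemma norm_open_in_borelE: "norm_open nrm U \<Longrightarrow> U \<in> sets (borelE nrm)"
  unfolding borelE_eq_sigma by auto

lemma measurable_borelE:
  "(\<And>U. norm_open nrm U \<Longrightarrow> f -` U \<inter> space M \<in> sets M) \<Longrightarrow> f \<in> M \<rightarrow>\<^sub>M borelE nrm"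
  unfolding borelE_eq_sigma by (rule measurable_measure_of) auto

definition K_gaussian_law ::
  "('k::field \<Rightarrow> real) \<Rightarrow> ('k \<Rightarrow> 'e::ab_group_add \<Rightarrow> 'e) \<Rightarrow> ('e \<Rightarrow> real) \<Rightarrow> 'e measure \<Rightarrow> bool" where
  "K_gaussian_law absv smul nrm \<nu> \<longleftrightarrow>
     (\<forall>a11 a12 a21 a22. orthonormal_pair absv a11 a12 a21 a22 \<longrightarrow>
        distr (\<nu> \<Otimes>\<^sub>M \<nu>) (borelE nrm \<Otimes>\<^sub>M borelE nrm)
          (\<lambda>(x, y). (smul a11 x + smul a12 y, smul a21 x + smul a22 y)) = \<nu> \<Otimes>\<^sub>M \<nu>)"

lemma K_gaussian_iff_law:
  "K_gaussian absv smul nrm M X \<longleftrightarrow>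
     X \<in> M \<rightarrow>\<^sub>M borelE nrm \<and> K_gaussian_law absv smul nrm (distr M (borelE nrm) X)"
  unfolding K_gaussian_def K_gaussian_law_def Let_def ..

locale separable_normed_space = nonarch_field absv for absv :: "'k::field \<Rightarrow> real" +
  fixes smul :: "'k \<Rightarrow> 'e::ab_group_add \<Rightarrow> 'e" and nrm :: "'e \<Rightarrow> real"
  assumes normed: "normed_space_K absv smul nrm"
    and separable: "\<exists>D. countable D \<and> (\<forall>x. \<forall>e>0. \<exists>d\<in>D. nrm (x - d) < e)"
begin

sublocale module smul
  using normed unfolding normed_space_K_def by auto

abbreviation B :: "'e measure" where
  "B \<equiv> borelE nrm"

lemma nrm_eq_0_iff [simp]: "nrm x = 0 \<longleftrightarrow> x = 0"
  and nrm_smul [simp]: "nrm (smul a x) = absv a * nrm x"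
  and nrm_add_le: "nrm (x + y) \<le> max (nrm x) (nrm y)"
  using normed unfolding normed_space_K_def by auto

lemma nrm_0 [simp]: "nrm 0 = 0"
  by simp

lemma nrm_minus [simp]: "nrm (- x) = nrm x"
  using nrm_smul[of "- 1" x] by simp

lemma nrm_nonneg [simp]: "0 \<le> nrm x"
  using nrm_add_le[of x "- x"] by simp

lemma nrm_diff_le: "nrm (a - b) \<le> max (nrm (a - c)) (nrm (c - b))"
  using nrm_add_le[of "a - c" "c - b"] by simp

lemma nrm_diff_commute: "nrm (a - b) = nrm (b - a)"
  using nrm_minus[of "a - b"] by simp

definition nrm_ball :: "'e \<Rightarrow> real \<Rightarrow> 'e set" where
  "nrm_ball x r = {y. nrm (y - x) < r}"

lemma nrm_ball_eq_center:
  assumes "z \<in> nrm_ball x r"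
  shows "nrm_ball z r = nrm_ball x r"
proof -
  have "nrm (y - z) < r \<longleftrightarrow> nrm (y - x) < r" for y
    using assms nrm_diff_le[of y x z] nrm_diff_le[of y z x] nrm_diff_commute[of x z]
    by (auto simp: nrm_ball_def)
  then show ?thesis
    by (auto simp: nrm_ball_def)
qed

lemma add_mem_nrm_ball: "a \<in> nrm_ball x r \<Longrightarrow> b \<in> nrm_ball y r \<Longrightarrow> a + b \<in> nrm_ball (x + y) r"
  unfolding nrm_ball_def using nrm_add_le[of "a - x" "b - y"] by (simp add: algebra_simps)

lemma nrm_ball_in_borelE: "nrm_ball x r \<in> sets B"
proof (intro norm_open_in_borelE, unfold norm_open_def, intro ballI)
  fix z assume "z \<in> nrm_ball x r"
  moreover have "0 < r" if "z \<in> nrm_ball x r"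
    using that nrm_nonneg[of "z - x"] unfolding nrm_ball_def by (simp del: nrm_nonneg)
  ultimately show "\<exists>e>0. {y. nrm (y - z) < e} \<subseteq> nrm_ball x r"
    using nrm_ball_eq_center unfolding nrm_ball_def by blast
qed

lemma measurable_smul_borelE: "smul c \<in> B \<rightarrow>\<^sub>M B"
proof (rule measurable_borelE)
  fix U assume U: "norm_open nrm U"
  have "norm_open nrm (smul c -` U)"
    unfolding norm_open_def
  proof
    fix x assume "x \<in> smul c -` U"
    then obtain e where e: "e > 0" "{y. nrm (y - smul c x) < e} \<subseteq> U"
      using U unfolding norm_open_def by auto
    have c1: "0 < absv c + 1"
      using absv_nonneg[of c] by linarith
    have "smul c y \<in> U" if "nrm (y - x) < e / (absv c + 1)" for y
    proof -
      have "nrm (smul c y - smul c x) = absv c * nrm (y - x)"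
        by (metis nrm_smul scale_right_diff_distrib)
      also have "\<dots> \<le> (absv c + 1) * nrm (y - x)"
        by (simp add: mult_right_mono)
      also have "\<dots> < e"
        using that c1 by (simp add: field_simps)
      finally show ?thesis
        using e by auto
    qed
    moreover have "e / (absv c + 1) > 0"
      using e c1 by simp
    ultimately show "\<exists>e>0. {y. nrm (y - x) < e} \<subseteq> smul c -` U"
      by blast
  qed
  then show "smul c -` U \<inter> space B \<in> sets B"
    by (simp add: norm_open_in_borelE)
qed

text \<open>The preimage of an open set under addition is a countable union of products of balls
  centred in a countable dense set; this is where separability is needed.\<close>

lemma measurable_add_borelE: "(\<lambda>p. fst p + snd p) \<in> B \<Otimes>\<^sub>M B \<rightarrow>\<^sub>M B"
proof (rule measurable_borelE)
  obtain D where D: "countable D" "\<And>x e. e > 0 \<Longrightarrow> \<exists>d\<in>D. nrm (x - d) < e"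
    using separable by blast
  fix U assume U: "norm_open nrm U"
  define R where "R = (\<lambda>(d1, d2, k::nat). nrm_ball d1 (1 / Suc k) \<times> nrm_ball d2 (1 / Suc k))"
  define P where "P = (\<lambda>p. fst p + snd p) -` U"
  define Q where "Q = {q \<in> D \<times> D \<times> UNIV. R q \<subseteq> P}"
  have "P \<subseteq> \<Union>(R ` Q)"
  proof
    fix p assume "p \<in> P"
    then obtain x y where p: "p = (x, y)" "x + y \<in> U"
      unfolding P_def by (cases p) auto
    then obtain e where e: "e > 0" "nrm_ball (x + y) e \<subseteq> U"
      using U unfolding norm_open_def nrm_ball_def by blast
    obtain k :: nat where k: "1 / Suc k < e"
      using e(1) by (metis nat_approx_posE)
    have r: "0 < 1 / real (Suc k)"
      by simp
    obtain d1 where d1: "d1 \<in> D" "x \<in> nrm_ball d1 (1 / Suc k)"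
      using D(2)[OF r] unfolding nrm_ball_def by blast
    obtain d2 where d2: "d2 \<in> D" "y \<in> nrm_ball d2 (1 / Suc k)"
      using D(2)[OF r] unfolding nrm_ball_def by blast
    have "R (d1, d2, k) \<subseteq> P"
    proof clarify
      fix a b assume "(a, b) \<in> R (d1, d2, k)"
      then have "a \<in> nrm_ball x (1 / Suc k)" "b \<in> nrm_ball y (1 / Suc k)"
        using nrm_ball_eq_center[OF d1(2)] nrm_ball_eq_center[OF d2(2)] by (simp_all add: R_def)
      then have "a + b \<in> nrm_ball (x + y) (1 / Suc k)"
        by (rule add_mem_nrm_ball)
      then have "a + b \<in> nrm_ball (x + y) e"
        using k by (simp add: nrm_ball_def)
      then show "(a, b) \<in> P"
        using e(2) by (auto simp: P_def)
    qed
    then have "(d1, d2, k) \<in> Q"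
      using d1 d2 by (simp add: Q_def)
    moreover have "p \<in> R (d1, d2, k)"
      using p d1 d2 by (simp add: R_def nrm_ball_def)
    ultimately show "p \<in> \<Union>(R ` Q)"
      by blast
  qed
  then have "P = \<Union>(R ` Q)"
    unfolding Q_def by blast
  moreover have "countable Q"
    by (rule countable_subset[of _ "D \<times> D \<times> UNIV"]) (auto simp: Q_def D(1))
  then have "\<Union>(R ` Q) \<in> sets (B \<Otimes>\<^sub>M B)"
    by (intro sets.countable_UN') (auto simp: R_def nrm_ball_in_borelE)
  ultimately show "(\<lambda>p. fst p + snd p) -` U \<inter> space (B \<Otimes>\<^sub>M B) \<in> sets (B \<Otimes>\<^sub>M B)"
    unfolding P_def by (simp add: space_pair_measure)
qed

lemma measurable_smul [measurable (raw)]: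
  "f \<in> M \<rightarrow>\<^sub>M B \<Longrightarrow> (\<lambda>x. smul c (f x)) \<in> M \<rightarrow>\<^sub>M B"
  using measurable_compose[OF _ measurable_smul_borelE] by blast

lemma measurable_add [measurable (raw)]:
  "f \<in> M \<rightarrow>\<^sub>M B \<Longrightarrow> g \<in> M \<rightarrow>\<^sub>M B \<Longrightarrow> (\<lambda>x. f x + g x) \<in> M \<rightarrow>\<^sub>M B"
  using measurable_compose[OF measurable_Pair measurable_add_borelE, of f M g] by simp

lemma measurable_sum [measurable (raw)]:
  "(\<And>i. i \<in> S \<Longrightarrow> f i \<in> M \<rightarrow>\<^sub>M B) \<Longrightarrow> (\<lambda>x. \<Sum>i\<in>S. f i x) \<in> M \<rightarrow>\<^sub>M B"
  by (induction S rule: infinite_finite_induct) (simp_all add: measurable_add)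

lemma sum_smul_diff:
  "(\<Sum>i\<in>N. smul (a i - d * b i) (x i)) = (\<Sum>i\<in>N. smul (a i) (x i)) - smul d (\<Sum>i\<in>N. smul (b i) (x i))"
  by (simp add: scale_left_diff_distrib sum_subtractf scale_sum_right)

lemma smul_sum_rescale:
  fixes n m :: nat
  assumes "\<And>i. c * \<beta> i = (if i < n then \<alpha> i else 0)"
  shows "smul c (\<Sum>i<n + m. smul (\<beta> i) (x i)) = (\<Sum>i<n. smul (\<alpha> i) (x i))"
proof -
  have "smul c (\<Sum>i<n + m. smul (\<beta> i) (x i)) = (\<Sum>i<n + m. smul (if i < n then \<alpha> i else 0) (x i))"
    by (simp add: scale_sum_right assms del: if_image_distrib)
  also have "\<dots> = (\<Sum>i<n. smul (\<alpha> i) (x i))"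
    by (rule sum.mono_neutral_cong_right) auto
  finally show ?thesis .
qed

lemma K_gaussian_law_return_0: "K_gaussian_law absv smul nrm (return B 0)"
  unfolding K_gaussian_law_def
proof (intro allI impI)
  fix a11 a12 a21 a22
  have "distr (return (B \<Otimes>\<^sub>M B) (0, 0)) (B \<Otimes>\<^sub>M B) (\<lambda>(x, y). (smul a11 x + smul a12 y, smul a21 x + smul a22 y))
      = return (B \<Otimes>\<^sub>M B) (0, 0)"
    by (subst distr_return) (simp_all add: space_pair_measure)
  then show "distr (return B 0 \<Otimes>\<^sub>M return B 0) (B \<Otimes>\<^sub>M B)
      (\<lambda>(x, y). (smul a11 x + smul a12 y, smul a21 x + smul a22 y)) = return B 0 \<Otimes>\<^sub>M return B 0"
    by (simp add: pair_measure_return)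
qed

lemma K_gaussian_law_distr_smul:
  assumes \<nu>: "prob_space \<nu>" "sets \<nu> = sets B" and gauss: "K_gaussian_law absv smul nrm \<nu>"
  shows "K_gaussian_law absv smul nrm (distr \<nu> B (smul c))"
  unfolding K_gaussian_law_def
proof (intro allI impI)
  fix a11 a12 a21 a22 assume op: "orthonormal_pair absv a11 a12 a21 a22"
  define S where "S = (\<lambda>(x, y). (smul c x, smul c y))"
  define T where "T = (\<lambda>(x, y). (smul a11 x + smul a12 y, smul a21 x + smul a22 y))"
  have [measurable_cong]: "sets \<nu> = sets B"
    by (fact \<nu>(2))
  have [measurable]: "S \<in> B \<Otimes>\<^sub>M B \<rightarrow>\<^sub>M B \<Otimes>\<^sub>M B" "T \<in> B \<Otimes>\<^sub>M B \<rightarrow>\<^sub>M B \<Otimes>\<^sub>M B"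
    unfolding S_def T_def by measurable
  have "smul c \<in> \<nu> \<rightarrow>\<^sub>M B"
    by measurable
  then have "sigma_finite_measure (distr \<nu> B (smul c))"
    by (intro prob_space_imp_sigma_finite prob_space.prob_space_distr \<nu>(1))
  then have prod: "distr \<nu> B (smul c) \<Otimes>\<^sub>M distr \<nu> B (smul c) = distr (\<nu> \<Otimes>\<^sub>M \<nu>) (B \<Otimes>\<^sub>M B) S"
    unfolding S_def by (intro pair_measure_distr) measurable
  have "T (S p) = S (T p)" for p
    by (cases p) (simp add: S_def T_def scale_right_distrib mult.commute)
  then have "distr (distr (\<nu> \<Otimes>\<^sub>M \<nu>) (B \<Otimes>\<^sub>M B) S) (B \<Otimes>\<^sub>M B) T =
      distr (distr (\<nu> \<Otimes>\<^sub>M \<nu>) (B \<Otimes>\<^sub>M B) T) (B \<Otimes>\<^sub>M B) S"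
    by (simp add: distr_distr comp_def)
  also have "distr (\<nu> \<Otimes>\<^sub>M \<nu>) (B \<Otimes>\<^sub>M B) T = \<nu> \<Otimes>\<^sub>M \<nu>"
    using gauss op unfolding K_gaussian_law_def T_def by blast
  finally show "distr (distr \<nu> B (smul c) \<Otimes>\<^sub>M distr \<nu> B (smul c)) (B \<Otimes>\<^sub>M B)
      (\<lambda>(x, y). (smul a11 x + smul a12 y, smul a21 x + smul a22 y)) = distr \<nu> B (smul c) \<Otimes>\<^sub>M distr \<nu> B (smul c)"
    unfolding prod T_def .
qed

end

section \<open>Invariance of Gaussian product measures\<close>

locale gaussian_measure = separable_normed_space absv smul nrm
  for absv :: "'k::field \<Rightarrow> real" and smul :: "'k \<Rightarrow> 'e::ab_group_add \<Rightarrow> 'e" and nrm +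
  fixes \<mu> :: "'e measure"
  assumes prob_space_\<mu>: "prob_space \<mu>"
    and sets_\<mu>: "sets \<mu> = sets B"
    and K_gaussian_law_\<mu>: "K_gaussian_law absv smul nrm \<mu>"
begin

declare sets_\<mu> [measurable_cong]

lemma measure_preserving_orthonormal_pair:
  assumes "orthonormal_pair absv a11 a12 a21 a22"
  shows "measure_preserving (\<mu> \<Otimes>\<^sub>M \<mu>) (\<mu> \<Otimes>\<^sub>M \<mu>)
           (\<lambda>(x, y). (smul a11 x + smul a12 y, smul a21 x + smul a22 y))"
  unfolding measure_preserving_def
proof
  show "(\<lambda>(x, y). (smul a11 x + smul a12 y, smul a21 x + smul a22 y)) \<in> \<mu> \<Otimes>\<^sub>M \<mu> \<rightarrow>\<^sub>M \<mu> \<Otimes>\<^sub>M \<mu>"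
    by measurable
  have "distr (\<mu> \<Otimes>\<^sub>M \<mu>) (\<mu> \<Otimes>\<^sub>M \<mu>) (\<lambda>(x, y). (smul a11 x + smul a12 y, smul a21 x + smul a22 y)) =
      distr (\<mu> \<Otimes>\<^sub>M \<mu>) (B \<Otimes>\<^sub>M B) (\<lambda>(x, y). (smul a11 x + smul a12 y, smul a21 x + smul a22 y))"
    by (intro distr_cong sets_pair_measure_cong sets_\<mu> refl)
  also have "\<dots> = \<mu> \<Otimes>\<^sub>M \<mu>"
    using K_gaussian_law_\<mu> assms unfolding K_gaussian_law_def by blast
  finally show "distr (\<mu> \<Otimes>\<^sub>M \<mu>) (\<mu> \<Otimes>\<^sub>M \<mu>) (\<lambda>(x, y). (smul a11 x + smul a12 y, smul a21 x + smul a22 y)) = \<mu> \<Otimes>\<^sub>M \<mu>" .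
qed

lemma distr_smul_unit:
  assumes "absv t = 1"
  shows "distr \<mu> \<mu> (smul t) = \<mu>"
proof -
  interpret \<mu>: prob_space \<mu>
    by (fact prob_space_\<mu>)
  have fst: "measure_preserving (\<mu> \<Otimes>\<^sub>M \<mu>) \<mu> fst"
    unfolding measure_preserving_def by (simp add: \<mu>.distr_pair_fst)
  have "measure_preserving \<mu> \<mu> (smul t)"
  proof (rule measure_preserving_factor[OF fst])
    show "smul t \<in> \<mu> \<rightarrow>\<^sub>M \<mu>"
      by measurable
    show "measure_preserving (\<mu> \<Otimes>\<^sub>M \<mu>) \<mu> (fst \<circ> (\<lambda>(x, y). (smul t x + smul 0 y, smul 0 x + smul 1 y)))"
      using measure_preserving_orthonormal_pair[OF orthonormal_pair_scale[OF assms]] fst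
      by (rule measure_preserving_comp)
  qed (auto simp: space_pair_measure)
  then show ?thesis
    unfolding measure_preserving_def by simp
qed

lemma prob_space_PiM_\<mu>: "prob_space (PiM I (\<lambda>_. \<mu>))"
  by (intro prob_space_PiM prob_space_\<mu>)

lemma measure_preserving_coordinate_pair:
  assumes op: "orthonormal_pair absv a11 a12 a21 a22" and I: "finite I" "p \<in> I" "q \<in> I" "p \<noteq> q"
  shows "measure_preserving (PiM I (\<lambda>_. \<mu>)) (PiM I (\<lambda>_. \<mu>))
           (\<lambda>x. \<lambda>i\<in>I. if i = p then smul a11 (x p) + smul a12 (x q)
                       else if i = q then smul a21 (x p) + smul a22 (x q) else x i)"
proof -
  define \<Psi> where "\<Psi> y = (\<lambda>i\<in>{p, q}. if i = p then smul a11 (y p) + smul a12 (y q)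
                                    else smul a21 (y p) + smul a22 (y q))" for y :: "_ \<Rightarrow> 'e"
  define e where "e = (\<lambda>(y, z). \<lambda>i\<in>{p, q}. if i = p then y else (z :: 'e))"
  define T where "T = (\<lambda>(x, y). (smul a11 x + smul a12 y, smul a21 x + smul a22 y))"
  have e: "measure_preserving (\<mu> \<Otimes>\<^sub>M \<mu>) (PiM {p, q} (\<lambda>_. \<mu>)) e"
    unfolding e_def by (rule measure_preserving_pair_PiM[OF prob_space_\<mu> \<open>p \<noteq> q\<close>])
  have "measure_preserving (PiM {p, q} (\<lambda>_. \<mu>)) (PiM {p, q} (\<lambda>_. \<mu>)) \<Psi>"
  proof (rule measure_preserving_factor[OF e])
    show "\<Psi> \<in> PiM {p, q} (\<lambda>_. \<mu>) \<rightarrow>\<^sub>M PiM {p, q} (\<lambda>_. \<mu>)"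
      unfolding \<Psi>_def by measurable
    show "measure_preserving (\<mu> \<Otimes>\<^sub>M \<mu>) (PiM {p, q} (\<lambda>_. \<mu>)) (e \<circ> T)"
      using measure_preserving_orthonormal_pair[OF op] e unfolding T_def by (rule measure_preserving_comp)
  qed (use \<open>p \<noteq> q\<close> in \<open>auto simp: \<Psi>_def e_def T_def fun_eq_iff\<close>)
  from measure_preserving_PiM_extend[OF prob_space_\<mu> I(1) _ this]
  show ?thesis
    by (rule measure_preserving_cong) (use I in \<open>auto simp: \<Psi>_def fun_eq_iff\<close>)
qed

lemma measure_preserving_coordinate_shear:
  assumes "finite I" "p \<in> I" "q \<in> I" "p \<noteq> q" "absv c \<le> 1"
  shows "measure_preserving (PiM I (\<lambda>_. \<mu>)) (PiM I (\<lambda>_. \<mu>))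
           (\<lambda>x. \<lambda>i\<in>I. if i = q then x q + smul c (x p) else x i)"
  using measure_preserving_coordinate_pair[OF orthonormal_pair_shear[OF assms(5)] assms(1-4)]
  by (rule measure_preserving_cong) (use assms(4) in \<open>auto simp: fun_eq_iff add.commute\<close>)

lemma measure_preserving_coordinate_scale:
  assumes "finite I" "absv t = 1"
  shows "measure_preserving (PiM I (\<lambda>_. \<mu>)) (PiM I (\<lambda>_. \<mu>))
           (\<lambda>x. \<lambda>i\<in>I. if i = q then smul t (x q) else x i)"
proof -
  define f where "f i = (if i = q then smul t else (\<lambda>x. x))" for i
  have "smul t \<in> \<mu> \<rightarrow>\<^sub>M \<mu>"
    by measurable
  then have f: "f i \<in> \<mu> \<rightarrow>\<^sub>M \<mu>" for i
    by (simp add: f_def)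
  have "distr \<mu> \<mu> (f i) = \<mu>" for i
    using distr_smul_unit[OF assms(2)] by (simp add: f_def distr_id2)
  then have "measure_preserving (PiM I (\<lambda>_. \<mu>)) (PiM I (\<lambda>_. \<mu>)) (\<lambda>x. \<lambda>i\<in>I. f i (x i))"
    using distr_PiM_componentwise[OF assms(1) prob_space_\<mu> f] f
    unfolding measure_preserving_def by (auto intro!: measurable_restrict)
  then show ?thesis
    by (rule measure_preserving_cong) (auto simp: f_def fun_eq_iff)
qed

lemma measure_preserving_add_coordinate_multiples:
  assumes J: "finite J" and j0: "j0 \<in> J" and d: "\<And>j. j \<in> J \<Longrightarrow> absv (d j) \<le> 1"
  shows "measure_preserving (PiM J (\<lambda>_. \<mu>)) (PiM J (\<lambda>_. \<mu>))
           (\<lambda>z. \<lambda>j\<in>J. if j = j0 then z j else z j + smul (d j) (z j0))"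
proof -
  have "measure_preserving (PiM J (\<lambda>_. \<mu>)) (PiM J (\<lambda>_. \<mu>))
          (\<lambda>z. \<lambda>j\<in>J. if j \<in> S then z j + smul (d j) (z j0) else z j)" if "S \<subseteq> J - {j0}" for S
  proof -
    have "finite S"
      using that J finite_subset by blast
    then show ?thesis
      using that
    proof (induction S rule: finite_induct)
      case empty
      show ?case
        using measure_preserving_id by (rule measure_preserving_cong) (auto simp: space_PiM)
    next
      case (insert s S)
      then have s: "s \<in> J" "j0 \<noteq> s"
        by auto
      from measure_preserving_comp[OF insert.IH measure_preserving_coordinate_shear[OF J j0 s d[OF s(1)]]]
      show ?case
        by (rule measure_preserving_cong) (use insert j0 in \<open>auto simp: fun_eq_iff\<close>)
    qed
  qed
  from this[of "J - {j0}"] show ?thesis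
    by (rule measure_preserving_cong) (auto simp: fun_eq_iff)
qed

lemma measure_preserving_coordinate_combination:
  assumes N: "finite N" and i0: "i0 \<in> N" and pivot: "absv (a i0) = 1"
    and a: "\<And>i. i \<in> N \<Longrightarrow> absv (a i) \<le> 1"
  shows "measure_preserving (PiM N (\<lambda>_. \<mu>)) (PiM N (\<lambda>_. \<mu>))
           (\<lambda>x. \<lambda>i\<in>N. if i = i0 then \<Sum>k\<in>N. smul (a k) (x k) else x i)"
proof -
  have "measure_preserving (PiM N (\<lambda>_. \<mu>)) (PiM N (\<lambda>_. \<mu>))
          (\<lambda>x. \<lambda>i\<in>N. if i = i0 then smul (a i0) (x i0) + (\<Sum>k\<in>S. smul (a k) (x k)) else x i)"
    if "S \<subseteq> N - {i0}" for S
  proof -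
    have "finite S"
      using that N finite_subset by blast
    then show ?thesis
      using that
    proof (induction S rule: finite_induct)
      case empty
      show ?case
        by (rule measure_preserving_cong[OF measure_preserving_coordinate_scale[OF N pivot, of i0]])
          (simp add: fun_eq_iff)
    next
      case (insert s S)
      then have s: "s \<in> N" "s \<noteq> i0"
        by auto
      from measure_preserving_comp[OF insert.IH measure_preserving_coordinate_shear[OF N s(1) i0 s(2) a[OF s(1)]]]
      show ?case
        by (rule measure_preserving_cong) (use insert in \<open>auto simp: fun_eq_iff add_ac\<close>)
    qed
  qed
  from this[of "N - {i0}"] show ?thesis
    by (rule measure_preserving_cong) (use N i0 in \<open>auto simp: fun_eq_iff sum.remove\<close>)
qed

text \<open>Elimination at a pivot \<open>u j0 i0\<close> of absolute value 1: \<open>\<Phi>\<close> replaces \<open>x i0\<close> by the pivot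
  row applied to \<open>x\<close>, \<open>G\<close> applies the other rows, cleared in column \<open>i0\<close>, to the other
  coordinates, and \<open>V\<close> adds back their multiples of the pivot row.\<close>

lemma measure_preserving_orthonormal_rows_step:
  fixes u :: "'j \<Rightarrow> 'i \<Rightarrow> 'k"
  assumes N: "finite N" and J: "finite J" and orth: "orthonormal_rows absv N J u"
    and j0: "j0 \<in> J" and i0: "i0 \<in> N" and pivot: "absv (u j0 i0) = 1"
    and IH: "measure_preserving (PiM (N - {i0}) (\<lambda>_. \<mu>)) (PiM (J - {j0}) (\<lambda>_. \<mu>))
               (\<lambda>x. \<lambda>j\<in>J - {j0}. \<Sum>i\<in>N - {i0}. smul (u j i - u j i0 / u j0 i0 * u j0 i) (x i))"
  shows "measure_preserving (PiM N (\<lambda>_. \<mu>)) (PiM J (\<lambda>_. \<mu>)) (\<lambda>x. \<lambda>j\<in>J. \<Sum>i\<in>N. smul (u j i) (x i))"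
proof -
  define N' J' where "N' = N - {i0}" and "J' = J - {j0}"
  define d where "d j = u j i0 / u j0 i0" for j
  define F where "F x = (\<lambda>j\<in>J'. \<Sum>i\<in>N'. smul (u j i - d j * u j0 i) (x i))" for x
  define \<Phi> where "\<Phi> x = (\<lambda>i\<in>N. if i = i0 then \<Sum>k\<in>N. smul (u j0 k) (x k) else x i)" for x
  define G where "G x = (F (restrict x N'))(j0 := x i0)" for x
  define V where "V z = (\<lambda>j\<in>J. if j = j0 then z j else z j + smul (d j) (z j0))" for z
  have "measure_preserving (PiM N' (\<lambda>_. \<mu>)) (PiM J' (\<lambda>_. \<mu>)) F"
    using IH unfolding F_def d_def N'_def J'_def .
  then have "measure_preserving (PiM (insert i0 N') (\<lambda>_. \<mu>)) (PiM (insert j0 J') (\<lambda>_. \<mu>)) G"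
    unfolding G_def by (intro measure_preserving_PiM_insert prob_space_\<mu>) (auto simp: N'_def J'_def)
  then have G: "measure_preserving (PiM N (\<lambda>_. \<mu>)) (PiM J (\<lambda>_. \<mu>)) G"
    using i0 j0 by (simp add: N'_def J'_def insert_absorb)
  have \<Phi>: "measure_preserving (PiM N (\<lambda>_. \<mu>)) (PiM N (\<lambda>_. \<mu>)) \<Phi>"
    unfolding \<Phi>_def using orthonormal_rows_entry_le[OF N J orth j0]
    by (intro measure_preserving_coordinate_combination N i0 pivot)
  have V: "measure_preserving (PiM J (\<lambda>_. \<mu>)) (PiM J (\<lambda>_. \<mu>)) V"
    unfolding V_def d_def using orthonormal_rows_entry_le[OF N J orth _ i0] pivot
    by (intro measure_preserving_add_coordinate_multiples J j0) simp
  show ?thesis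
  proof (rule measure_preserving_cong[OF measure_preserving_comp[OF measure_preserving_comp[OF \<Phi> G] V]])
    fix x assume "x \<in> space (PiM N (\<lambda>_. \<mu>))"
    have "u j0 i0 \<noteq> 0"
      using pivot by auto
    then have "(\<Sum>i\<in>N'. smul (u j i - d j * u j0 i) (x i)) = (\<Sum>i\<in>N. smul (u j i - d j * u j0 i) (x i))" for j
      using N i0 by (simp add: N'_def d_def sum.remove)
    moreover have "restrict (\<Phi> x) N' = restrict x N'"
      by (auto simp: \<Phi>_def N'_def fun_eq_iff)
    ultimately have F_\<Phi>: "F (restrict (\<Phi> x) N') j =
        (\<Sum>i\<in>N. smul (u j i) (x i)) - smul (d j) (\<Sum>i\<in>N. smul (u j0 i) (x i))" if "j \<in> J'" for j
      using that by (simp add: F_def sum_smul_diff)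
    have "\<Phi> x i0 = (\<Sum>i\<in>N. smul (u j0 i) (x i))"
      using i0 by (simp add: \<Phi>_def)
    then show "(\<lambda>j\<in>J. \<Sum>i\<in>N. smul (u j i) (x i)) = (V \<circ> (G \<circ> \<Phi>)) x"
      using F_\<Phi> j0 by (auto simp: fun_eq_iff V_def G_def J'_def)
  qed
qed

lemma measure_preserving_orthonormal_rows:
  fixes u :: "'j \<Rightarrow> 'i \<Rightarrow> 'k"
  assumes "finite N" "finite J" "orthonormal_rows absv N J u"
  shows "measure_preserving (PiM N (\<lambda>_. \<mu>)) (PiM J (\<lambda>_. \<mu>)) (\<lambda>x. \<lambda>j\<in>J. \<Sum>i\<in>N. smul (u j i) (x i))"
  using assms
proof (induction N arbitrary: J u rule: finite_psubset_induct)
  case (psubset N)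
  note N = psubset.hyps(1) and J = psubset.prems(1) and orth = psubset.prems(2)
  show ?case
  proof (cases "J = {}")
    case True
    have "(\<lambda>x. \<lambda>j\<in>{}. \<Sum>i\<in>N. smul (u j i) (x i)) \<in> PiM N (\<lambda>_. \<mu>) \<rightarrow>\<^sub>M PiM {} (\<lambda>_. \<mu>)"
      by measurable
    then show ?thesis
      unfolding True measure_preserving_def using distr_PiM_empty[OF prob_space_PiM_\<mu>] by blast
  next
    case False
    then obtain j0 where j0: "j0 \<in> J"
      by blast
    obtain i0 where i0: "i0 \<in> N" and pivot: "absv (u j0 i0) = 1"
      using orthonormal_rows_pivot[OF N J orth j0] by blast
    have "measure_preserving (PiM (N - {i0}) (\<lambda>_. \<mu>)) (PiM (J - {j0}) (\<lambda>_. \<mu>))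
        (\<lambda>x. \<lambda>j\<in>J - {j0}. \<Sum>i\<in>N - {i0}. smul (u j i - u j i0 / u j0 i0 * u j0 i) (x i))"
      using N J i0 by (intro psubset.IH orthonormal_rows_eliminate[OF N J orth j0 i0 pivot]) auto
    then show ?thesis
      by (rule measure_preserving_orthonormal_rows_step[OF N J orth j0 i0 pivot])
  qed
qed

lemma distr_orthogonal_family:
  assumes orth: "orthogonal_family absv n \<alpha> m"
  obtains c where "distr (PiM {..<n} (\<lambda>_. \<mu>)) (PiM {..<m} (\<lambda>_. B)) (\<lambda>x. \<lambda>j\<in>{..<m}. \<Sum>i<n. smul (\<alpha> j i) (x i))
      = PiM {..<m} (\<lambda>j. distr \<mu> B (smul (c j)))"
proof -
  obtain \<beta> c where \<beta>: "orthonormal_rows absv {..<n + m} {..<m} \<beta>"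
    and c\<beta>: "\<And>j i. c j * \<beta> j i = (if i < n then \<alpha> j i else 0)"
    using orthogonal_family_rescale_orthonormal[OF orth] by metis
  define H where "H x = (\<lambda>j\<in>{..<m}. \<Sum>i<n. smul (\<alpha> j i) (x i))" for x
  define Z where "Z x = (\<lambda>j\<in>{..<m}. \<Sum>i<n + m. smul (\<beta> j i) (x i))" for x
  define S where "S z = (\<lambda>j\<in>{..<m}. smul (c j) (z j))" for z
  interpret P: product_prob_space "\<lambda>_. \<mu>" "{..<n + m}"
    by (intro product_prob_spaceI prob_space_\<mu>)
  have Z: "measure_preserving (PiM {..<n + m} (\<lambda>_. \<mu>)) (PiM {..<m} (\<lambda>_. \<mu>)) Z"
    unfolding Z_def by (intro measure_preserving_orthonormal_rows \<beta>) simp_all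
  have "smul (c j) (\<Sum>i<n + m. smul (\<beta> j i) (x i)) = (\<Sum>i<n. smul (\<alpha> j i) (x i))" for j x
    using c\<beta> by (rule smul_sum_rescale)
  then have SZ: "H (restrict x {..<n}) = S (Z x)" for x
    by (simp add: H_def S_def Z_def fun_eq_iff)
  have [measurable]: "Z \<in> PiM {..<n + m} (\<lambda>_. \<mu>) \<rightarrow>\<^sub>M PiM {..<m} (\<lambda>_. \<mu>)"
    using Z unfolding measure_preserving_def by simp
  have [measurable]: "H \<in> PiM {..<n} (\<lambda>_. \<mu>) \<rightarrow>\<^sub>M PiM {..<m} (\<lambda>_. B)"
    "S \<in> PiM {..<m} (\<lambda>_. \<mu>) \<rightarrow>\<^sub>M PiM {..<m} (\<lambda>_. B)"
    unfolding H_def S_def by measurable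
  have "distr (PiM {..<n} (\<lambda>_. \<mu>)) (PiM {..<m} (\<lambda>_. B)) H =
      distr (distr (PiM {..<n + m} (\<lambda>_. \<mu>)) (PiM {..<n} (\<lambda>_. \<mu>)) (\<lambda>x. restrict x {..<n})) (PiM {..<m} (\<lambda>_. B)) H"
    by (simp add: P.distr_PiM_restrict_finite)
  also have "\<dots> = distr (PiM {..<n + m} (\<lambda>_. \<mu>)) (PiM {..<m} (\<lambda>_. B)) (S \<circ> Z)"
    by (subst distr_distr) (simp_all add: comp_def SZ)
  also have "\<dots> = distr (distr (PiM {..<n + m} (\<lambda>_. \<mu>)) (PiM {..<m} (\<lambda>_. \<mu>)) Z) (PiM {..<m} (\<lambda>_. B)) S"
    by (subst distr_distr) simp_all
  also have "\<dots> = distr (PiM {..<m} (\<lambda>_. \<mu>)) (PiM {..<m} (\<lambda>_. B)) S"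
    using Z unfolding measure_preserving_def by simp
  also have "\<dots> = PiM {..<m} (\<lambda>j. distr \<mu> B (smul (c j)))"
    unfolding S_def by (intro distr_PiM_componentwise prob_space_\<mu>) measurable
  finally show ?thesis
    unfolding H_def by (rule that)
qed

lemma indep_K_gaussian_orthogonal_combinations:
  assumes M: "prob_space M" and indep: "prob_space.indep_vars M (\<lambda>_. B) X {..<n}"
    and X: "\<And>i. i < n \<Longrightarrow> X i \<in> M \<rightarrow>\<^sub>M B" "\<And>i. i < n \<Longrightarrow> distr M B (X i) = \<mu>"
    and orth: "orthogonal_family absv n \<alpha> m"
  shows "prob_space.indep_vars M (\<lambda>_. B) (\<lambda>j \<omega>. \<Sum>i<n. smul (\<alpha> j i) (X i \<omega>)) {..<m} \<and>
         (\<forall>j<m. K_gaussian absv smul nrm M (\<lambda>\<omega>. \<Sum>i<n. smul (\<alpha> j i) (X i \<omega>)))"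
proof -
  interpret M: prob_space M
    by (fact M)
  define Y where "Y j \<omega> = (\<Sum>i<n. smul (\<alpha> j i) (X i \<omega>))" for j \<omega>
  note [measurable] = X(1)
  have Y: "Y j \<in> M \<rightarrow>\<^sub>M B" for j
    unfolding Y_def by measurable
  have law_X: "distr M (PiM {..<n} (\<lambda>_. B)) (\<lambda>\<omega>. \<lambda>i\<in>{..<n}. X i \<omega>) = PiM {..<n} (\<lambda>_. \<mu>)"
    using indep X by (intro M.distr_PiM_iid) auto
  obtain c where law_H: "distr (PiM {..<n} (\<lambda>_. \<mu>)) (PiM {..<m} (\<lambda>_. B))
      (\<lambda>x. \<lambda>j\<in>{..<m}. \<Sum>i<n. smul (\<alpha> j i) (x i)) = PiM {..<m} (\<lambda>j. distr \<mu> B (smul (c j)))"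
    using distr_orthogonal_family[OF orth] .
  have "distr M (PiM {..<m} (\<lambda>_. B)) (\<lambda>\<omega>. \<lambda>j\<in>{..<m}. Y j \<omega>) =
      distr M (PiM {..<m} (\<lambda>_. B))
        ((\<lambda>x. \<lambda>j\<in>{..<m}. \<Sum>i<n. smul (\<alpha> j i) (x i)) \<circ> (\<lambda>\<omega>. \<lambda>i\<in>{..<n}. X i \<omega>))"
    by (intro distr_cong) (auto simp: Y_def)
  also have "\<dots> = distr (distr M (PiM {..<n} (\<lambda>_. B)) (\<lambda>\<omega>. \<lambda>i\<in>{..<n}. X i \<omega>)) (PiM {..<m} (\<lambda>_. B))
      (\<lambda>x. \<lambda>j\<in>{..<m}. \<Sum>i<n. smul (\<alpha> j i) (x i))"
    by (intro distr_distr[symmetric]) measurable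
  finally have law_Y: "distr M (PiM {..<m} (\<lambda>_. B)) (\<lambda>\<omega>. \<lambda>j\<in>{..<m}. Y j \<omega>) =
      PiM {..<m} (\<lambda>j. distr \<mu> B (smul (c j)))"
    unfolding law_X law_H .
  have \<nu>: "prob_space (distr \<mu> B (smul (c j)))" "sets (distr \<mu> B (smul (c j))) = sets B" for j
    by (auto intro: prob_space.prob_space_distr prob_space_\<mu>)
  have "M.indep_vars (\<lambda>_. B) Y {..<m}"
    using Y \<nu> law_Y by (rule M.indep_vars_if_distr_eq_PiM)
  moreover have "K_gaussian absv smul nrm M (Y j)" if "j < m" for j
    using M.distr_eq_component_if_distr_eq_PiM[OF Y \<nu> law_Y, of j] that Y
      K_gaussian_law_distr_smul[OF prob_space_\<mu> sets_\<mu> K_gaussian_law_\<mu>]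
    by (simp add: K_gaussian_iff_law)
  ultimately show ?thesis
    unfolding Y_def by blast
qed

end

theorem theorem4p11:
  fixes absv :: "'k::field \<Rightarrow> real"
    and smul :: "'k \<Rightarrow> 'e::ab_group_add \<Rightarrow> 'e"
    and nrm :: "'e \<Rightarrow> real"
    and M :: "'a measure"
    and X :: "nat \<Rightarrow> 'a \<Rightarrow> 'e"
    and n m :: nat
    and \<alpha> :: "nat \<Rightarrow> nat \<Rightarrow> 'k"
  assumes "local_field absv"
    and "separable_banach_K absv smul nrm"
    and "prob_space M"
    and "prob_space.indep_vars M (\<lambda>_. borelE nrm) X {..<n}"
    and "\<forall>i<n. \<forall>k<n. distr M (borelE nrm) (X i) = distr M (borelE nrm) (X k)"
    and "\<forall>i<n. K_gaussian absv smul nrm M (X i)"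
    and "orthogonal_family absv n \<alpha> m"
  shows "prob_space.indep_vars M (\<lambda>_. borelE nrm) (\<lambda>j \<omega>. \<Sum>i<n. smul (\<alpha> j i) (X i \<omega>)) {..<m} \<and>
         (\<forall>j<m. K_gaussian absv smul nrm M (\<lambda>\<omega>. \<Sum>i<n. smul (\<alpha> j i) (X i \<omega>)))"
proof -
  interpret separable_normed_space absv smul nrm
    using assms(1,2) unfolding local_field_def separable_banach_K_def
    by unfold_locales (auto simp: nonarch_field_def)
  have X: "X i \<in> M \<rightarrow>\<^sub>M B" if "i < n" for i
    using assms(6) that unfolding K_gaussian_iff_law by blast
  \<comment> \<open>For \<open>n = 0\<close> there is no \<open>X i\<close> to take the law from, and any Gaussian law will do.\<close>
  define \<mu> where "\<mu> = (if n = 0 then return B 0 else distr M B (X 0))"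
  have "prob_space \<mu>" "sets \<mu> = sets B"
    using X by (auto simp: \<mu>_def intro: prob_space_return prob_space.prob_space_distr assms(3))
  moreover have "K_gaussian_law absv smul nrm \<mu>"
    using assms(6) K_gaussian_law_return_0 by (auto simp: \<mu>_def K_gaussian_iff_law)
  ultimately interpret gaussian_measure absv smul nrm \<mu>
    by (intro gaussian_measure.intro separable_normed_space_axioms gaussian_measure_axioms.intro)
  have "distr M B (X i) = \<mu>" if "i < n" for i
    using assms(5)[rule_format, of i 0] that by (simp add: \<mu>_def)
  with assms(3,4,7) X show ?thesis
    by (intro indep_K_gaussian_orthogonal_combinations)
qed

end
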